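(* Let $\mathcal{A}$ be a pca with a partial numbering $\gamma : \omega \to \mathcal{A}$ and let $X = \{ \langle n, m, k\rangle \mid n, m, k \in \omega,\ \gamma(n) \cdot \gamma(m) = \gamma(k) \}$. Then $\mathcal{A}$ is embeddable in $\mathcal{G}^X$ and hence in $\mathcal{G}$.
   Context: A pca is a set with a partial binary application operation containing distinct $\mathrm{s},\mathrm{k}$ with $\mathrm{k}ab\downarrow=a$, $\mathrm{s}ab\downarrow$, $\mathrm{s}abc\simeq(ac)(bc)$. An embedding of pcas is an injective map $f$ with: if $ab$ is defined then $f(a)f(b)$ is defined and equals $f(ab)$. A partial numbering of $\mathcal{A}$ is a surjective partial function $\gamma:\omega\rightharpoonup\mathcal{A}$. $\mathcal{G}$ is $\mathcal{P}(\omega)$ with application $A\cdot B=\{n:\exists u\,(\langle n,u\rangle\in A\wedge D_u\subseteq B)\}$, where $\langle\cdot,\cdot\rangle$ is a bijective computable pairing with $\langle 0,0\rangle=0$ (extended to triples in the standard way) and $D_u$ is the finite set with canonical code $u$. $\mathcal{G}^X$ is the least class containing $X$ and all c.e. sets and closed under this application (equivalently, all sets enumeration-reducible to $X$). *)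

theory Defs
  imports Main "HOL-Library.Nat_Bijection"
begin

text \<open>A pca is a carrier set A with a partial application ap (None = undefined).
  papp lifts application to possibly-undefined terms (strict), so that equality of
  option values is Kleene equality.\<close>

fun papp :: "('a \<Rightarrow> 'a \<Rightarrow> 'a option) \<Rightarrow> 'a option \<Rightarrow> 'a option \<Rightarrow> 'a option" where
  "papp ap (Some a) (Some b) = ap a b"
| "papp ap _ _ = None"

definition pca :: "'a set \<Rightarrow> ('a \<Rightarrow> 'a \<Rightarrow> 'a option) \<Rightarrow> bool" where
  "pca A ap \<longleftrightarrow>
     (\<forall>a\<in>A. \<forall>b\<in>A. \<forall>c. ap a b = Some c \<longrightarrow> c \<in> A) \<and>
     (\<exists>s\<in>A. \<exists>k\<in>A. s \<noteq> k \<and>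
        (\<forall>a\<in>A. \<forall>b\<in>A. papp ap (papp ap (Some k) (Some a)) (Some b) = Some a) \<and>
        (\<forall>a\<in>A. \<forall>b\<in>A. papp ap (papp ap (Some s) (Some a)) (Some b) \<noteq> None) \<and>
        (\<forall>a\<in>A. \<forall>b\<in>A. \<forall>c\<in>A.
           papp ap (papp ap (papp ap (Some s) (Some a)) (Some b)) (Some c)
           = papp ap (papp ap (Some a) (Some c)) (papp ap (Some b) (Some c))))"

definition pca_embedding ::
  "'a set \<Rightarrow> ('a \<Rightarrow> 'a \<Rightarrow> 'a option) \<Rightarrow> 'b set \<Rightarrow> ('b \<Rightarrow> 'b \<Rightarrow> 'b option) \<Rightarrow> ('a \<Rightarrow> 'b) \<Rightarrow> bool" where
  "pca_embedding A ap B bp f \<longleftrightarrow>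
     inj_on f A \<and> f ` A \<subseteq> B \<and>
     (\<forall>a\<in>A. \<forall>b\<in>A. \<forall>c. ap a b = Some c \<longrightarrow> bp (f a) (f b) = Some (f c))"

definition partial_numbering :: "(nat \<Rightarrow> 'a option) \<Rightarrow> 'a set \<Rightarrow> bool" where
  "partial_numbering \<gamma> A \<longleftrightarrow> ran \<gamma> = A"

datatype recf = Z | S | Proj nat | Comp recf "recf list" | Prec recf recf | Mn recf

inductive eval :: "recf \<Rightarrow> nat list \<Rightarrow> nat \<Rightarrow> bool" where
  "eval Z xs 0"
| "eval S (x # xs) (Suc x)"
| "i < length xs \<Longrightarrow> eval (Proj i) xs (xs ! i)"
| "list_all2 (\<lambda>g y. eval g xs y) gs ys \<Longrightarrow> eval f ys z \<Longrightarrow> eval (Comp f gs) xs z"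
| "eval f xs y \<Longrightarrow> eval (Prec f g) (0 # xs) y"
| "eval (Prec f g) (n # xs) y \<Longrightarrow> eval g (n # y # xs) z \<Longrightarrow> eval (Prec f g) (Suc n # xs) z"
| "eval f (n # xs) 0 \<Longrightarrow> (\<forall>i<n. \<exists>y>0. eval f (i # xs) y) \<Longrightarrow> eval (Mn f) xs n"
monos list_all2_mono

definition ce :: "nat set \<Rightarrow> bool" where
  "ce W \<longleftrightarrow> (\<exists>f. W = {n. \<exists>y. eval f [n] y})"

text \<open>Pairing: Cantor pairing prod_encode (bijective, computable, pairs (0,0) to 0);
  canonical finite set codes: set_decode (binary expansion).\<close>
abbreviation pair :: "nat \<Rightarrow> nat \<Rightarrow> nat" where
  "pair n m \<equiv> prod_encode (n, m)"

abbreviation triple :: "nat \<Rightarrow> nat \<Rightarrow> nat \<Rightarrow> nat" where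
  "triple n m k \<equiv> pair n (pair m k)"

abbreviation D :: "nat \<Rightarrow> nat set" where
  "D u \<equiv> set_decode u"

definition gapp :: "nat set \<Rightarrow> nat set \<Rightarrow> nat set" where
  "gapp A B = {n. \<exists>u. pair n u \<in> A \<and> D u \<subseteq> B}"

definition Gap :: "nat set \<Rightarrow> nat set \<Rightarrow> nat set option" where
  "Gap A B = Some (gapp A B)"

inductive_set GX :: "nat set \<Rightarrow> nat set set" for X :: "nat set" where
  base: "X \<in> GX X"
| ce: "ce W \<Longrightarrow> W \<in> GX X"
| app: "A \<in> GX X \<Longrightarrow> B \<in> GX X \<Longrightarrow> gapp A B \<in> GX X"

end

theory Submission
  imports Defs
begin

(* The image F(a) of a consists of codes defined inductively from X: for every index n of a,
   each pair (n, 2z+1) is a code of n, and if (n, m, k) is in X and x is a code of k, then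
   (x, 2^e) with e = (m, 2(n,k)+1) is a code of n.  The odd leaf codes record the index, which
   makes F injective.  Since D(2^e) = {e} and e is a leaf code of m, the second clause says
   exactly that F(a) F(b) = F(c) whenever a b = c.  Whether p is a code of n can be decided from
   finitely many entries of X, and the combinator k certifies within X that an arbitrary index n
   names the same element as a fixed index n0 of a (k n0 = j and j q = n).  Hence F(a) = W X for
   a c.e. set W, so F(a) lies in G^X. *)

section \<open>Computable functions and decidable predicates\<close>

definition computable :: "nat \<Rightarrow> (nat list \<Rightarrow> nat) \<Rightarrow> bool" where
  "computable k g \<longleftrightarrow> (\<exists>f. \<forall>xs. length xs = k \<longrightarrow> (\<forall>y. eval f xs y \<longleftrightarrow> y = g xs))"

definition decidable :: "nat \<Rightarrow> (nat list \<Rightarrow> bool) \<Rightarrow> bool" where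
  "decidable k P \<longleftrightarrow> computable k (\<lambda>xs. if P xs then 1 else 0)"

inductive_cases eval_ZE: "eval Z xs y"
inductive_cases eval_SE: "eval S xs y"
inductive_cases eval_ProjE: "eval (Proj i) xs y"
inductive_cases eval_CompE: "eval (Comp f gs) xs y"
inductive_cases eval_PrecE: "eval (Prec f g) xs y"
inductive_cases eval_MnE: "eval (Mn f) xs y"

lemma computable_zero: "computable k (\<lambda>_. 0)"
  unfolding computable_def by (rule exI[of _ Z]) (auto elim: eval_ZE intro: eval.intros)

lemma computable_succ: "computable 1 (\<lambda>xs. Suc (xs ! 0))"
  unfolding computable_def
  by (rule exI[of _ S]) (auto elim!: eval_SE intro: eval.intros simp: length_Suc_conv)

lemma computable_nth: "i < k \<Longrightarrow> computable k (\<lambda>xs. xs ! i)"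
  unfolding computable_def by (rule exI[of _ "Proj i"]) (auto elim: eval_ProjE intro: eval.intros)

lemma computable_cong:
  "computable k g \<Longrightarrow> (\<And>xs. length xs = k \<Longrightarrow> g xs = g' xs) \<Longrightarrow> computable k g'"
  unfolding computable_def by metis

lemma computable_comp:
  assumes "computable m g" "length hs = m" "\<forall>h\<in>set hs. computable k h"
  shows "computable k (\<lambda>xs. g (map (\<lambda>h. h xs) hs))"
proof -
  obtain f where f: "\<forall>xs. length xs = m \<longrightarrow> (\<forall>y. eval f xs y \<longleftrightarrow> y = g xs)"
    using assms(1) unfolding computable_def by blast
  obtain F where F: "\<forall>h\<in>set hs. \<forall>xs. length xs = k \<longrightarrow> (\<forall>y. eval (F h) xs y \<longleftrightarrow> y = h xs)"
    using bchoice[OF assms(3)[unfolded computable_def]] by blast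
  have args: "list_all2 (\<lambda>g y. eval g xs y) (map F hs) ys \<longleftrightarrow> ys = map (\<lambda>h. h xs) hs"
    if "length xs = k" for xs ys
  proof
    assume ys: "list_all2 (\<lambda>g y. eval g xs y) (map F hs) ys"
    then have len: "length ys = length hs"
      by (simp add: list_all2_conv_all_nth)
    show "ys = map (\<lambda>h. h xs) hs"
    proof (rule nth_equalityI)
      fix i assume "i < length ys"
      then show "ys ! i = map (\<lambda>h. h xs) hs ! i"
        using ys F that len nth_mem[of i hs] by (simp add: list_all2_conv_all_nth)
    qed (simp add: len)
  next
    assume "ys = map (\<lambda>h. h xs) hs"
    then show "list_all2 (\<lambda>g y. eval g xs y) (map F hs) ys"
      using F that by (simp add: list_all2_conv_all_nth)
  qed
  show ?thesis
    unfolding computable_def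
  proof (intro exI[of _ "Comp f (map F hs)"] allI impI iffI)
    fix xs y assume len: "length xs = k" and "eval (Comp f (map F hs)) xs y"
    then obtain ys where "list_all2 (\<lambda>g y. eval g xs y) (map F hs) ys" "eval f ys y"
      by (auto elim: eval_CompE)
    then show "y = g (map (\<lambda>h. h xs) hs)"
      using f assms(2) args[OF len] by auto
  next
    fix xs y assume len: "length xs = k" and "y = g (map (\<lambda>h. h xs) hs)"
    then have "eval f (map (\<lambda>h. h xs) hs) y"
      using f assms(2) by auto
    then show "eval (Comp f (map F hs)) xs y"
      using args[OF len] by (auto intro: eval.intros(4))
  qed
qed

lemma computable_compose1:
  "computable 1 (\<lambda>xs. f (xs ! 0)) \<Longrightarrow> computable k a \<Longrightarrow> computable k (\<lambda>xs. f (a xs))"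
  using computable_comp[of 1 "\<lambda>xs. f (xs ! 0)" "[a]" k] by simp

lemma computable_compose2:
  "computable 2 (\<lambda>xs. f (xs ! 0) (xs ! 1)) \<Longrightarrow> computable k a \<Longrightarrow> computable k b \<Longrightarrow>
   computable k (\<lambda>xs. f (a xs) (b xs))"
  using computable_comp[of 2 "\<lambda>xs. f (xs ! 0) (xs ! 1)" "[a, b]" k] by simp

lemma computable_Suc: "computable k a \<Longrightarrow> computable k (\<lambda>xs. Suc (a xs))"
  by (rule computable_compose1[OF computable_succ])

lemma computable_const: "computable k (\<lambda>_. c)"
  by (induction c) (simp_all add: computable_zero computable_Suc)

lemma computable_reindex:
  assumes "computable k g" "length is = k" "\<forall>i\<in>set is. i < m"
  shows "computable m (\<lambda>zs. g (map (nth zs) is))"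
proof -
  have "computable m (\<lambda>zs. g (map (\<lambda>h. h zs) (map (\<lambda>i zs. zs ! i) is)))"
    by (rule computable_comp) (use assms computable_nth in auto)
  then show ?thesis by (simp add: comp_def)
qed

lemma map_nth_upt_length: "map (nth zs) [j..<length zs] = drop j zs"
  by (rule nth_equalityI) auto

lemma computable_drop: "computable k a \<Longrightarrow> computable (j + k) (\<lambda>zs. a (drop j zs))"
  using computable_reindex[of k a "[j..<j + k]" "j + k"]
  by (auto elim!: computable_cong simp flip: map_nth_upt_length)

(* The step function receives t # acc # ys, the argument layout of Prec. *)
fun prim_rec :: "(nat list \<Rightarrow> nat) \<Rightarrow> (nat list \<Rightarrow> nat) \<Rightarrow> nat \<Rightarrow> nat list \<Rightarrow> nat" where
  "prim_rec g0 g1 0 ys = g0 ys"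
| "prim_rec g0 g1 (Suc t) ys = g1 (t # prim_rec g0 g1 t ys # ys)"

lemma computable_prim_rec:
  assumes "computable k g0" "computable (Suc (Suc k)) g1"
  shows "computable (Suc k) (\<lambda>xs. prim_rec g0 g1 (hd xs) (tl xs))"
proof -
  obtain f0 where f0: "\<forall>xs. length xs = k \<longrightarrow> (\<forall>y. eval f0 xs y \<longleftrightarrow> y = g0 xs)"
    using assms(1) unfolding computable_def by blast
  obtain f1 where f1: "\<forall>xs. length xs = Suc (Suc k) \<longrightarrow> (\<forall>y. eval f1 xs y \<longleftrightarrow> y = g1 xs)"
    using assms(2) unfolding computable_def by blast
  have "eval (Prec f0 f1) (t # ys) y \<longleftrightarrow> y = prim_rec g0 g1 t ys" if "length ys = k" for t ys y
  proof (induction t arbitrary: y)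
    case 0
    then show ?case using f0 that by (auto elim: eval_PrecE intro: eval.intros)
  next
    case (Suc t)
    then show ?case using f1 that by (auto elim: eval_PrecE intro: eval.intros(6))
  qed
  then show ?thesis
    unfolding computable_def by (intro exI[of _ "Prec f0 f1"]) (auto simp: length_Suc_conv)
qed

lemma computable_prim_rec_at:
  assumes "computable k g0" "computable (Suc (Suc k)) g1" "computable k t"
  shows "computable k (\<lambda>xs. prim_rec g0 g1 (t xs) xs)"
proof -
  have "computable k (\<lambda>xs. (\<lambda>ys. prim_rec g0 g1 (hd ys) (tl ys))
      (map (\<lambda>h. h xs) (t # map (\<lambda>i xs. xs ! i) [0..<k])))"
    by (rule computable_comp[OF computable_prim_rec[OF assms(1,2)]])
      (use assms(3) computable_nth in auto)
  then show ?thesis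
    by (rule computable_cong) (simp add: comp_def, metis map_nth)
qed

lemma computable_nth0: "computable (Suc (Suc k)) (\<lambda>zs. zs ! 0)"
  and computable_nth1: "computable (Suc (Suc k)) (\<lambda>zs. zs ! 1)"
  by (simp_all add: computable_nth)

lemma computable_add:
  assumes "computable k a" "computable k b"
  shows "computable k (\<lambda>xs. a xs + b xs)"
proof -
  have "prim_rec a (\<lambda>zs. Suc (zs ! 1)) t xs = a xs + t" for t xs
    by (induction t) auto
  moreover have "computable k (\<lambda>xs. prim_rec a (\<lambda>zs. Suc (zs ! 1)) (b xs) xs)"
    by (intro computable_prim_rec_at assms computable_Suc computable_nth1)
  ultimately show ?thesis by simp
qed

lemma computable_mult:
  assumes "computable k a" "computable k b"
  shows "computable k (\<lambda>xs. a xs * b xs)"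
proof -
  have "prim_rec (\<lambda>_. 0) (\<lambda>zs. zs ! 1 + a (drop 2 zs)) t xs = t * a xs" for t xs
    by (induction t) auto
  moreover have "computable k (\<lambda>xs. prim_rec (\<lambda>_. 0) (\<lambda>zs. zs ! 1 + a (drop 2 zs)) (b xs) xs)"
    using computable_drop[OF assms(1), of 2]
    by (intro computable_prim_rec_at computable_const computable_add computable_nth1 assms) simp_all
  ultimately show ?thesis by (simp add: mult.commute)
qed

lemma computable_diff:
  assumes "computable k a" "computable k b"
  shows "computable k (\<lambda>xs. a xs - b xs)"
proof -
  have "prim_rec (\<lambda>_. 0) (\<lambda>zs. zs ! 0) t xs = t - 1" for t xs
    by (induction t) auto
  moreover have "computable (Suc (Suc k)) (\<lambda>zs. prim_rec (\<lambda>_. 0) (\<lambda>zs. zs ! 0) (zs ! 1) zs)"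
    by (intro computable_prim_rec_at computable_const computable_nth0 computable_nth1)
  ultimately have pred: "computable (Suc (Suc k)) (\<lambda>zs. zs ! 1 - 1)"
    by simp
  have "prim_rec a (\<lambda>zs. zs ! 1 - 1) t xs = a xs - t" for t xs
    by (induction t) auto
  moreover have "computable k (\<lambda>xs. prim_rec a (\<lambda>zs. zs ! 1 - 1) (b xs) xs)"
    by (intro computable_prim_rec_at assms pred)
  ultimately show ?thesis by simp
qed

lemma computable_power2:
  assumes "computable k a"
  shows "computable k (\<lambda>xs. 2 ^ a xs)"
proof -
  have "prim_rec (\<lambda>_. 1) (\<lambda>zs. zs ! 1 + zs ! 1) t xs = 2 ^ t" for t xs
    by (induction t) auto
  moreover have "computable k (\<lambda>xs. prim_rec (\<lambda>_. 1) (\<lambda>zs. zs ! 1 + zs ! 1) (a xs) xs)"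
    by (intro computable_prim_rec_at assms computable_const computable_add computable_nth1)
  ultimately show ?thesis by simp
qed

lemma computable_triangle:
  assumes "computable k a"
  shows "computable k (\<lambda>xs. triangle (a xs))"
proof -
  have "prim_rec (\<lambda>_. 0) (\<lambda>zs. zs ! 1 + Suc (zs ! 0)) t xs = triangle t" for t xs
    by (induction t) auto
  moreover have "computable k (\<lambda>xs. prim_rec (\<lambda>_. 0) (\<lambda>zs. zs ! 1 + Suc (zs ! 0)) (a xs) xs)"
    by (intro computable_prim_rec_at assms computable_const computable_add computable_Suc
        computable_nth0 computable_nth1)
  ultimately show ?thesis by simp
qed

lemma computable_pair:
  "computable k a \<Longrightarrow> computable k b \<Longrightarrow> computable k (\<lambda>xs. pair (a xs) (b xs))"
  unfolding prod_encode_def by (simp add: computable_add computable_triangle)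

lemma decidable_cong:
  "decidable k P \<Longrightarrow> (\<And>xs. length xs = k \<Longrightarrow> P xs = Q xs) \<Longrightarrow> decidable k Q"
  unfolding decidable_def by (erule computable_cong) simp

lemma decidable_eq:
  assumes "computable k a" "computable k b"
  shows "decidable k (\<lambda>xs. a xs = b xs)"
proof -
  have "computable k (\<lambda>xs. 1 - ((a xs - b xs) + (b xs - a xs)))"
    by (intro computable_diff computable_add computable_const assms)
  then show ?thesis unfolding decidable_def by (rule computable_cong) auto
qed

lemma decidable_less:
  assumes "computable k a" "computable k b"
  shows "decidable k (\<lambda>xs. a xs < b xs)"
proof -
  have "computable k (\<lambda>xs. 1 - (1 - (b xs - a xs)))"
    by (intro computable_diff computable_const assms)
  then show ?thesis unfolding decidable_def by (rule computable_cong) auto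
qed

lemma decidable_le: "computable k a \<Longrightarrow> computable k b \<Longrightarrow> decidable k (\<lambda>xs. a xs \<le> b xs)"
  using decidable_less[of k a "\<lambda>xs. Suc (b xs)"] computable_Suc[of k b]
  by (simp add: less_Suc_eq_le)

lemma decidable_not:
  assumes "decidable k P"
  shows "decidable k (\<lambda>xs. \<not> P xs)"
proof -
  have "computable k (\<lambda>xs. 1 - (if P xs then 1 else 0))"
    using assms unfolding decidable_def by (intro computable_diff computable_const)
  then show ?thesis unfolding decidable_def by (rule computable_cong) auto
qed

lemma decidable_conj:
  assumes "decidable k P" "decidable k Q"
  shows "decidable k (\<lambda>xs. P xs \<and> Q xs)"
proof -
  have "computable k (\<lambda>xs. (if P xs then 1 else 0) * (if Q xs then 1 else 0))"
    using assms unfolding decidable_def by (intro computable_mult)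
  then show ?thesis unfolding decidable_def by (rule computable_cong) auto
qed

lemma decidable_disj: "decidable k P \<Longrightarrow> decidable k Q \<Longrightarrow> decidable k (\<lambda>xs. P xs \<or> Q xs)"
  using decidable_not[OF decidable_conj[OF decidable_not decidable_not], of k P Q] by simp

lemma computable_if:
  assumes "decidable k P" "computable k a" "computable k b"
  shows "computable k (\<lambda>xs. if P xs then a xs else b xs)"
proof -
  have "computable k (\<lambda>xs. (if P xs then 1 else 0) * a xs + (1 - (if P xs then 1 else 0)) * b xs)"
    using assms unfolding decidable_def
    by (intro computable_add computable_mult computable_diff computable_const)
  then show ?thesis by (rule computable_cong) auto
qed

lemma decidable_odd:
  assumes "computable k a"
  shows "decidable k (\<lambda>xs. odd (a xs))"
proof -
  have "prim_rec (\<lambda>_. 0) (\<lambda>zs. 1 - zs ! 1) t xs = t mod 2" for t xs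
    by (induction t) (auto simp: mod_Suc)
  moreover have "computable k (\<lambda>xs. prim_rec (\<lambda>_. 0) (\<lambda>zs. 1 - zs ! 1) (a xs) xs)"
    by (intro computable_prim_rec_at assms computable_const computable_diff computable_nth1)
  ultimately have "computable k (\<lambda>xs. a xs mod 2)"
    by simp
  then show ?thesis unfolding decidable_def
    by (rule computable_cong) (auto simp: odd_iff_mod_2_eq_one)
qed

lemma decidable_compose2:
  assumes "decidable 2 (\<lambda>xs. R (xs ! 0) (xs ! 1))" "computable k a" "computable k b"
  shows "decidable k (\<lambda>xs. R (a xs) (b xs))"
  using computable_compose2[of "\<lambda>x y. if R x y then 1 else 0", OF _ assms(2,3)] assms(1)
  by (simp add: decidable_def)

lemma decidable_reindex:
  assumes "decidable k P" "length is = k" "\<forall>i\<in>set is. i < m"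
  shows "decidable m (\<lambda>zs. P (map (nth zs) is))"
  using computable_reindex[of k "\<lambda>xs. if P xs then 1 else 0" "is" m] assms
  unfolding decidable_def by simp

lemma decidable_hd_drop2:
  assumes "decidable (Suc k) P"
  shows "decidable (Suc (Suc k)) (\<lambda>zs. P (zs ! 0 # drop 2 zs))"
proof -
  have "decidable (Suc (Suc k)) (\<lambda>zs. P (map (nth zs) (0 # [2..<Suc (Suc k)])))"
    by (rule decidable_reindex[OF assms]) auto
  then show ?thesis
    by (rule decidable_cong) (metis list.simps(9) map_nth_upt_length)
qed

definition bounded_min :: "(nat \<Rightarrow> bool) \<Rightarrow> nat \<Rightarrow> nat" where
  "bounded_min P b = (if \<exists>y<b. P y then LEAST y. P y else b)"

lemma bounded_min_0: "bounded_min P 0 = 0"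
  by (simp add: bounded_min_def)

lemma bounded_min_less: "\<exists>y<b. P y \<Longrightarrow> bounded_min P b < b"
  unfolding bounded_min_def by (auto intro: le_less_trans[OF Least_le])

lemma bounded_min_Suc:
  "bounded_min P (Suc t) = (if bounded_min P t = t \<and> \<not> P t then Suc t else bounded_min P t)"
proof (cases "\<exists>y<t. P y")
  case True
  moreover have "\<exists>y<Suc t. P y"
    using True less_SucI by blast
  ultimately show ?thesis
    using bounded_min_less[of t P] by (simp add: bounded_min_def)
next
  case False
  then have "(\<exists>y<Suc t. P y) \<longleftrightarrow> P t" and "P t \<Longrightarrow> (LEAST y. P y) = t"
    by (auto simp: less_Suc_eq intro!: Least_equality leI)
  with False show ?thesis
    by (auto simp: bounded_min_def)
qed

lemma bounded_min_eqI: "P y \<Longrightarrow> y < b \<Longrightarrow> (\<And>z. z < y \<Longrightarrow> \<not> P z) \<Longrightarrow> bounded_min P b = y"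
  unfolding bounded_min_def by (auto intro!: Least_equality leI)

lemma bounded_min_eq_bound_iff: "bounded_min P b = b \<longleftrightarrow> (\<forall>y<b. \<not> P y)"
  using bounded_min_less[of b P] by (auto simp: bounded_min_def)

lemma computable_bounded_min:
  assumes "decidable (Suc k) P" "computable k b"
  shows "computable k (\<lambda>xs. bounded_min (\<lambda>y. P (y # xs)) (b xs))"
proof -
  let ?step = "\<lambda>zs. if zs ! 1 = zs ! 0 \<and> \<not> P (zs ! 0 # drop 2 zs) then Suc (zs ! 0) else zs ! 1"
  have "prim_rec (\<lambda>_. 0) ?step t xs = bounded_min (\<lambda>y. P (y # xs)) t" for t xs
    by (induction t) (simp_all add: bounded_min_0 bounded_min_Suc)
  moreover have "computable k (\<lambda>xs. prim_rec (\<lambda>_. 0) ?step (b xs) xs)"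
    by (intro computable_prim_rec_at computable_if decidable_conj decidable_eq decidable_not
        decidable_hd_drop2 assms computable_const computable_Suc computable_nth0 computable_nth1)
  ultimately show ?thesis by simp
qed

lemma decidable_ball:
  assumes "decidable (Suc k) P" "computable k b"
  shows "decidable k (\<lambda>xs. \<forall>y<b xs. P (y # xs))"
  using decidable_eq[OF computable_bounded_min[OF decidable_not[OF assms(1)] assms(2)] assms(2)]
  by (simp add: bounded_min_eq_bound_iff)

lemma decidable_bex:
  assumes "decidable (Suc k) P" "computable k b"
  shows "decidable k (\<lambda>xs. \<exists>y<b xs. P (y # xs))"
  using decidable_not[OF decidable_ball[OF decidable_not[OF assms(1)] assms(2)]] by simp

lemma computable_by_search:
  assumes "decidable 2 (\<lambda>zs. Q (zs ! 0) (zs ! 1))"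
    and "\<And>x. f x = bounded_min (\<lambda>y. Q y x) (Suc x)"
    and "computable k a"
  shows "computable k (\<lambda>xs. f (a xs))"
proof (rule computable_compose1[OF _ assms(3)])
  have "computable 1 (\<lambda>xs. bounded_min (\<lambda>y. (\<lambda>zs. Q (zs ! 0) (zs ! 1)) (y # xs)) (Suc (xs ! 0)))"
    using assms(1) by (intro computable_bounded_min computable_Suc computable_nth) (simp_all add: numeral_2_eq_2)
  then show "computable 1 (\<lambda>xs. f (xs ! 0))"
    by (rule computable_cong) (simp add: assms(2))
qed

lemma ce_projection:
  assumes "decidable 2 (\<lambda>zs. R (zs ! 0) (zs ! 1))"
  shows "ce {x. \<exists>y. R y x}"
proof -
  obtain f where f: "\<And>xs v. length xs = 2 \<Longrightarrow> eval f xs v \<longleftrightarrow> v = (if R (xs ! 0) (xs ! 1) then 0 else 1)"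
    using decidable_not[OF assms] unfolding decidable_def computable_def
    by (metis (no_types, lifting))
  have "(\<exists>n. eval (Mn f) [x] n) \<longleftrightarrow> (\<exists>y. R y x)" for x
  proof
    assume "\<exists>n. eval (Mn f) [x] n"
    then obtain n where "eval f [n, x] 0"
      by (auto elim: eval_MnE)
    then have "R n x"
      using f[of "[n, x]" 0] by (simp split: if_splits)
    then show "\<exists>y. R y x" ..
  next
    assume "\<exists>y. R y x"
    then have "R (LEAST y. R y x) x" "\<forall>i<(LEAST y. R y x). \<exists>v>0. eval f [i, x] v"
      using f not_less_Least by (auto intro: LeastI_ex)
    then have "eval (Mn f) [x] (LEAST y. R y x)"
      using f by (auto intro: eval.intros)
    then show "\<exists>n. eval (Mn f) [x] n" ..
  qed
  then show ?thesis
    unfolding ce_def by blast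
qed

definition unpair1 :: "nat \<Rightarrow> nat" where
  "unpair1 p = fst (prod_decode p)"

definition unpair2 :: "nat \<Rightarrow> nat" where
  "unpair2 p = snd (prod_decode p)"

lemma unpair1_pair [simp]: "unpair1 (pair x y) = x"
  and unpair2_pair [simp]: "unpair2 (pair x y) = y"
  by (simp_all add: unpair1_def unpair2_def)

lemma pair_unpair: "pair (unpair1 p) (unpair2 p) = p"
  by (simp add: unpair1_def unpair2_def)

lemma unpair_le: "unpair1 p \<le> p" "unpair2 p \<le> p"
  by (metis le_prod_encode_1 le_prod_encode_2 pair_unpair)+

lemma pair_Suc_pos [simp]: "0 < pair m (Suc z)"
  by (simp add: prod_encode_def)

lemma unpair1_less:
  assumes "0 < unpair2 p"
  shows "unpair1 p < p"
proof -
  have "triangle (unpair1 p + unpair2 p) + unpair1 p = p"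
    using pair_unpair[of p] unfolding prod_encode_def by simp
  moreover have "0 < triangle (unpair1 p + unpair2 p)"
    using assms by (metis add_gr_0 gr0_conv_Suc triangle_Suc zero_less_Suc trans_less_add2)
  ultimately show ?thesis
    by linarith
qed

lemma computable_unpair1: "computable k a \<Longrightarrow> computable k (\<lambda>xs. unpair1 (a xs))"
proof (rule computable_by_search[where f = unpair1 and Q = "\<lambda>x p. \<exists>y<Suc p. pair x y = p"])
  have "decidable 3 (\<lambda>ws. pair (ws ! 1) (ws ! 0) = ws ! 2)"
    by (intro decidable_eq computable_pair computable_nth) auto
  then have "decidable 2 (\<lambda>zs. \<exists>y<Suc (zs ! 1). (\<lambda>ws. pair (ws ! 1) (ws ! 0) = ws ! 2) (y # zs))"
    by (intro decidable_bex) (auto simp: numeral_3_eq_3 numeral_2_eq_2 intro: computable_Suc computable_nth)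
  then show "decidable 2 (\<lambda>zs. \<exists>y<Suc (zs ! 1). pair (zs ! 0) y = zs ! 1)"
    by simp
  show "unpair1 p = bounded_min (\<lambda>x. \<exists>y<Suc p. pair x y = p) (Suc p)" for p
    by (rule sym, rule bounded_min_eqI) (use unpair_le pair_unpair in \<open>auto intro: le_imp_less_Suc\<close>)
qed

lemma computable_unpair2: "computable k a \<Longrightarrow> computable k (\<lambda>xs. unpair2 (a xs))"
proof (rule computable_by_search[where f = unpair2 and Q = "\<lambda>y p. \<exists>x<Suc p. pair x y = p"])
  have "decidable 3 (\<lambda>ws. pair (ws ! 0) (ws ! 1) = ws ! 2)"
    by (intro decidable_eq computable_pair computable_nth) auto
  then have "decidable 2 (\<lambda>zs. \<exists>x<Suc (zs ! 1). (\<lambda>ws. pair (ws ! 0) (ws ! 1) = ws ! 2) (x # zs))"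
    by (intro decidable_bex) (auto simp: numeral_3_eq_3 numeral_2_eq_2 intro: computable_Suc computable_nth)
  then show "decidable 2 (\<lambda>zs. \<exists>x<Suc (zs ! 1). pair x (zs ! 0) = zs ! 1)"
    by simp
  show "unpair2 p = bounded_min (\<lambda>y. \<exists>x<Suc p. pair x y = p) (Suc p)" for p
    by (rule sym, rule bounded_min_eqI) (use unpair_le pair_unpair in \<open>auto intro: le_imp_less_Suc\<close>)
qed

definition log2 :: "nat \<Rightarrow> nat" where
  "log2 u = bounded_min (\<lambda>e. 2 ^ e = u) (Suc u)"

lemma log2_power2 [simp]: "log2 (2 ^ e) = e"
proof (unfold log2_def, rule bounded_min_eqI)
  show "e < Suc (2 ^ e)"
    using less_exp[of e] by linarith
qed simp_all

lemma computable_log2: "computable k a \<Longrightarrow> computable k (\<lambda>xs. log2 (a xs))"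
proof (rule computable_by_search[where f = log2, OF _ log2_def])
  show "decidable 2 (\<lambda>zs. 2 ^ zs ! 0 = zs ! 1)"
    by (intro decidable_eq computable_power2 computable_nth) simp_all
qed

lemma computable_div2: "computable k a \<Longrightarrow> computable k (\<lambda>xs. a xs div 2)"
proof (rule computable_by_search[where f = "\<lambda>x. x div 2" and Q = "\<lambda>q x. x < 2 * q + 2"])
  show "decidable 2 (\<lambda>zs. zs ! 1 < 2 * zs ! 0 + 2)"
    by (intro decidable_less computable_add computable_mult computable_const computable_nth) simp_all
  show "x div 2 = bounded_min (\<lambda>q. x < 2 * q + 2) (Suc x)" for x
    by (rule sym, rule bounded_min_eqI) auto
qed

lemma mem_set_decode_iff:
  "t \<in> D v \<longleftrightarrow> (\<exists>q<Suc v. q * 2 ^ t \<le> v \<and> v < Suc q * 2 ^ t \<and> odd q)"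
proof
  assume "t \<in> D v"
  moreover have "v < Suc (v div 2 ^ t) * 2 ^ t"
    by (metis add.commute add_less_cancel_left div_mult_mod_eq mod_less_divisor mult_Suc
        zero_less_numeral zero_less_power)
  ultimately show "\<exists>q<Suc v. q * 2 ^ t \<le> v \<and> v < Suc q * 2 ^ t \<and> odd q"
    by (intro exI[of _ "v div 2 ^ t"]) (auto simp: set_decode_def le_imp_less_Suc)
next
  assume "\<exists>q<Suc v. q * 2 ^ t \<le> v \<and> v < Suc q * 2 ^ t \<and> odd q"
  then obtain q where "q * 2 ^ t \<le> v" "v < Suc q * 2 ^ t" "odd q" by blast
  then show "t \<in> D v"
    by (metis div_nat_eqI mult.commute set_decode_def mem_Collect_eq)
qed

lemma decidable_mem_set_decode:
  "computable k a \<Longrightarrow> computable k b \<Longrightarrow> decidable k (\<lambda>xs. a xs \<in> D (b xs))"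
proof (rule decidable_compose2)
  have "decidable 3 (\<lambda>ws. ws ! 0 * 2 ^ ws ! 1 \<le> ws ! 2 \<and> ws ! 2 < Suc (ws ! 0) * 2 ^ ws ! 1 \<and> odd (ws ! 0))"
    by (intro decidable_conj decidable_le decidable_less decidable_odd computable_mult computable_power2
        computable_Suc computable_nth) auto
  then have "decidable 2 (\<lambda>zs. \<exists>q<Suc (zs ! 1). (\<lambda>ws. ws ! 0 * 2 ^ ws ! 1 \<le> ws ! 2 \<and>
      ws ! 2 < Suc (ws ! 0) * 2 ^ ws ! 1 \<and> odd (ws ! 0)) (q # zs))"
    by (intro decidable_bex) (auto simp: numeral_3_eq_3 numeral_2_eq_2 intro: computable_Suc computable_nth)
  then show "decidable 2 (\<lambda>zs. zs ! 0 \<in> D (zs ! 1))"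
    by (rule decidable_cong) (simp add: mem_set_decode_iff)
qed

section \<open>Codes for the image of an element\<close>

inductive is_code :: "nat set \<Rightarrow> nat \<Rightarrow> nat \<Rightarrow> bool" for T where
  leaf: "is_code T m (pair m (Suc (2 * z)))"
| app: "triple n m k \<in> T \<Longrightarrow> is_code T k x \<Longrightarrow>
    is_code T n (pair x (2 ^ pair m (Suc (2 * pair n k))))"

lemma is_code_mono: "is_code T n p \<Longrightarrow> T \<subseteq> T' \<Longrightarrow> is_code T' n p"
  by (induction rule: is_code.induct) (auto intro: is_code.intros)

lemma is_code_finite_support: "is_code T n p \<Longrightarrow> \<exists>F. finite F \<and> F \<subseteq> T \<and> is_code F n p"
proof (induction rule: is_code.induct)
  case (leaf m z)
  then show ?case using is_code.leaf by blast
next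
  case (app n m k x)
  then obtain F where "finite F" "F \<subseteq> T" "is_code F k x" by blast
  then have "is_code (insert (triple n m k) F) k x"
    using is_code_mono by blast
  then have "is_code (insert (triple n m k) F) n (pair x (2 ^ pair m (Suc (2 * pair n k))))"
    by (intro is_code.app) auto
  then show ?case
    using \<open>finite F\<close> \<open>F \<subseteq> T\<close> app(1) by (intro exI[of _ "insert (triple n m k) F"]) auto
qed

lemma is_code_unpair2_pos: "is_code T n p \<Longrightarrow> 0 < unpair2 p"
  by (induction rule: is_code.induct) auto

lemma not_is_code_0: "\<not> is_code T n 0"
proof -
  have "pair 0 0 = 0"
    by (simp add: prod_encode_def)
  then have "unpair2 0 = 0"
    by (metis unpair2_pair)
  then show ?thesis
    using is_code_unpair2_pos by fastforce
qed

lemma is_code_odd_index: "is_code T n p \<Longrightarrow> odd (unpair2 p) \<Longrightarrow> unpair1 p = n"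
  by (induction rule: is_code.induct) auto

lemma set_decode_power2: "D (2 ^ e) = {e}"
proof -
  have "set_encode {e} = 2 ^ e"
    by simp
  then show ?thesis
    by (metis finite.emptyI finite.insertI set_encode_inverse)
qed

definition app_table :: "(nat \<Rightarrow> 'a option) \<Rightarrow> ('a \<Rightarrow> 'a \<Rightarrow> 'a option) \<Rightarrow> nat set" where
  "app_table \<gamma> ap = {triple n m k | n m k.
     \<exists>a b c. \<gamma> n = Some a \<and> \<gamma> m = Some b \<and> \<gamma> k = Some c \<and> ap a b = Some c}"

definition graph_embedding :: "(nat \<Rightarrow> 'a option) \<Rightarrow> nat set \<Rightarrow> 'a \<Rightarrow> nat set" where
  "graph_embedding \<gamma> T a = {p. \<exists>n. \<gamma> n = Some a \<and> is_code T n p}"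

lemma triple_mem_app_table_iff:
  "triple n m k \<in> app_table \<gamma> ap \<longleftrightarrow>
   (\<exists>a b c. \<gamma> n = Some a \<and> \<gamma> m = Some b \<and> \<gamma> k = Some c \<and> ap a b = Some c)"
  by (auto simp: app_table_def)

lemma inj_on_graph_embedding:
  assumes "A \<subseteq> ran \<gamma>"
  shows "inj_on (graph_embedding \<gamma> T) A"
proof (rule inj_onI)
  fix a a' assume "a \<in> A" "a' \<in> A" and eq: "graph_embedding \<gamma> T a = graph_embedding \<gamma> T a'"
  obtain m where m: "\<gamma> m = Some a"
    using assms \<open>a \<in> A\<close> by (auto simp: ran_def)
  have "pair m (Suc 0) \<in> graph_embedding \<gamma> T a"
    using is_code.leaf[of T m 0] m by (auto simp: graph_embedding_def)
  then obtain n where "\<gamma> n = Some a'" "is_code T n (pair m (Suc 0))"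
    using eq by (auto simp: graph_embedding_def)
  moreover from this(2) have "m = n"
    using is_code_odd_index by fastforce
  ultimately show "a = a'"
    using m by simp
qed

lemma gapp_graph_embedding_subset:
  assumes "X = app_table \<gamma> ap" "ap a b = Some c"
  shows "gapp (graph_embedding \<gamma> X a) (graph_embedding \<gamma> X b) \<subseteq> graph_embedding \<gamma> X c"
proof
  fix x assume "x \<in> gapp (graph_embedding \<gamma> X a) (graph_embedding \<gamma> X b)"
  then obtain u n where u: "D u \<subseteq> graph_embedding \<gamma> X b" and n: "\<gamma> n = Some a" "is_code X n (pair x u)"
    unfolding gapp_def graph_embedding_def by blast
  from n(2) show "x \<in> graph_embedding \<gamma> X c"
  proof cases
    case (leaf z)
    then have "0 \<in> graph_embedding \<gamma> X b"
      using u by auto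
    then show ?thesis
      using not_is_code_0 by (auto simp: graph_embedding_def)
  next
    case (app m k x')
    let ?e = "pair m (Suc (2 * pair n k))"
    have "?e \<in> graph_embedding \<gamma> X b"
      using u app(1) by (simp add: set_decode_power2)
    then have "\<gamma> m = Some b"
      using is_code_odd_index[of X _ ?e] by (auto simp: graph_embedding_def)
    then have "\<gamma> k = Some c"
      using app(2) n(1) assms(1,2) by (auto simp: triple_mem_app_table_iff)
    then show ?thesis
      using app(1,3) by (auto simp: graph_embedding_def)
  qed
qed

lemma graph_embedding_subset_gapp:
  assumes "X = app_table \<gamma> ap" "ap a b = Some c" "a \<in> ran \<gamma>" "b \<in> ran \<gamma>"
  shows "graph_embedding \<gamma> X c \<subseteq> gapp (graph_embedding \<gamma> X a) (graph_embedding \<gamma> X b)"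
proof
  fix x assume "x \<in> graph_embedding \<gamma> X c"
  then obtain k where k: "\<gamma> k = Some c" "is_code X k x"
    unfolding graph_embedding_def by blast
  obtain n m where n: "\<gamma> n = Some a" and m: "\<gamma> m = Some b"
    using assms(3,4) by (auto simp: ran_def)
  let ?e = "pair m (Suc (2 * pair n k))"
  have "triple n m k \<in> X"
    using n m k(1) assms(1,2) by (auto simp: triple_mem_app_table_iff)
  then have "pair x (2 ^ ?e) \<in> graph_embedding \<gamma> X a"
    using is_code.app[OF _ k(2)] n by (auto simp: graph_embedding_def)
  moreover have "D (2 ^ ?e) \<subseteq> graph_embedding \<gamma> X b"
    using is_code.leaf m by (auto simp: graph_embedding_def set_decode_power2)
  ultimately show "x \<in> gapp (graph_embedding \<gamma> X a) (graph_embedding \<gamma> X b)"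
    unfolding gapp_def by blast
qed

lemma gapp_graph_embedding:
  assumes "X = app_table \<gamma> ap" "ap a b = Some c" "a \<in> ran \<gamma>" "b \<in> ran \<gamma>"
  shows "gapp (graph_embedding \<gamma> X a) (graph_embedding \<gamma> X b) = graph_embedding \<gamma> X c"
  using gapp_graph_embedding_subset[OF assms(1,2)] graph_embedding_subset_gapp[OF assms] by (rule equalityI)

section \<open>Membership in an image is decidable from a finite table\<close>

(* Decoders for an application code pair x (2 ^ pair m (Suc (2 * pair n k))): app_exp is
   the exponent, and app_fun, app_arg, app_res are the indices n, m, k of the table entry. *)
definition app_exp :: "nat \<Rightarrow> nat" where
  "app_exp p = log2 (unpair2 p)"

definition app_arg :: "nat \<Rightarrow> nat" where
  "app_arg p = unpair1 (app_exp p)"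

definition app_fun :: "nat \<Rightarrow> nat" where
  "app_fun p = unpair1 (unpair2 (app_exp p) div 2)"

definition app_res :: "nat \<Rightarrow> nat" where
  "app_res p = unpair2 (unpair2 (app_exp p) div 2)"

definition is_app_code :: "nat \<Rightarrow> bool" where
  "is_app_code p \<longleftrightarrow> unpair2 p = 2 ^ app_exp p \<and> odd (unpair2 (app_exp p))"

definition code_index :: "nat \<Rightarrow> nat" where
  "code_index p = (if odd (unpair2 p) then unpair1 p else app_fun p)"

(* A code is unwound along its spine p, code_tail p, ..., which becomes constant at a leaf;
   locally_valid checks a single link of the spine against the table. *)
definition code_tail :: "nat \<Rightarrow> nat" where
  "code_tail p = (if odd (unpair2 p) then p else unpair1 p)"

definition locally_valid :: "nat set \<Rightarrow> nat \<Rightarrow> bool" where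
  "locally_valid T p \<longleftrightarrow> odd (unpair2 p) \<or>
     (is_app_code p \<and> triple (app_fun p) (app_arg p) (app_res p) \<in> T \<and> app_res p = code_index (unpair1 p))"

lemma app_code_decode:
  fixes x m n k :: nat
  defines "p \<equiv> pair x (2 ^ pair m (Suc (2 * pair n k)))"
  shows "even (unpair2 p)" "app_arg p = m" "app_fun p = n" "app_res p = k" "is_app_code p"
    "code_index p = n" "code_tail p = x"
proof -
  show even: "even (unpair2 p)"
    unfolding p_def by simp
  have exp: "app_exp p = pair m (Suc (2 * pair n k))"
    unfolding app_exp_def p_def by simp
  show "app_arg p = m" "app_fun p = n" "app_res p = k" "is_app_code p"
    unfolding app_arg_def app_fun_def app_res_def is_app_code_def exp by (simp_all add: p_def)
  with even show "code_index p = n" "code_tail p = x"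
    unfolding code_index_def code_tail_def by (simp_all add: p_def)
qed

lemma app_code_eq:
  assumes "is_app_code p"
  shows "pair (unpair1 p) (2 ^ pair (app_arg p) (Suc (2 * pair (app_fun p) (app_res p)))) = p"
proof -
  have "Suc (2 * pair (app_fun p) (app_res p)) = unpair2 (app_exp p)"
    using assms odd_two_times_div_two_succ[of "unpair2 (app_exp p)"]
    unfolding is_app_code_def app_fun_def app_res_def pair_unpair by simp
  then have "pair (app_arg p) (Suc (2 * pair (app_fun p) (app_res p))) = app_exp p"
    unfolding app_arg_def by (simp add: pair_unpair)
  then show ?thesis
    using assms pair_unpair[of p] unfolding is_app_code_def by simp
qed

lemma code_tail_power_leaf:
  "odd (unpair2 p) \<Longrightarrow> (code_tail ^^ i) p = p"
  by (induction i) (simp_all add: code_tail_def)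

lemma is_code_imp_valid_spine:
  "is_code T n p \<Longrightarrow> code_index p = n \<and> (\<forall>i. locally_valid T ((code_tail ^^ i) p))"
proof (induction rule: is_code.induct)
  case (leaf m z)
  then show ?case
    by (simp add: code_tail_power_leaf code_index_def locally_valid_def)
next
  case (app n m k x)
  let ?p = "pair x (2 ^ pair m (Suc (2 * pair n k)))"
  note decode = app_code_decode[of x m n k]
  have "locally_valid T ((code_tail ^^ i) ?p)" for i
  proof (cases i)
    case 0
    then show ?thesis
      using app decode by (simp add: locally_valid_def)
  next
    case (Suc j)
    then have "(code_tail ^^ i) ?p = (code_tail ^^ j) x"
      using decode by (simp add: funpow_Suc_right del: funpow.simps)
    then show ?thesis
      using app by simp
  qed
  with decode show ?case by simp
qed

lemma valid_spine_tail:
  assumes "even (unpair2 p)" "0 < b" "\<forall>i\<le>b. locally_valid T ((code_tail ^^ i) p)"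
  shows "\<forall>i\<le>b - 1. locally_valid T ((code_tail ^^ i) (unpair1 p))"
proof (intro allI impI)
  fix i assume "i \<le> b - 1"
  then have "Suc i \<le> b"
    using assms(2) by linarith
  then have "locally_valid T ((code_tail ^^ Suc i) p)"
    using assms(3) by blast
  moreover have "code_tail p = unpair1 p"
    using assms(1) by (simp add: code_tail_def)
  ultimately show "locally_valid T ((code_tail ^^ i) (unpair1 p))"
    by (simp add: funpow_Suc_right del: funpow.simps)
qed

text \<open>Along a valid spine the codes strictly decrease until a leaf is reached, so a spine
  starting at p is valid as soon as its first p + 1 codes are.\<close>

lemma valid_spine_imp_is_code:
  "code_index p = n \<Longrightarrow> p \<le> b \<Longrightarrow> \<forall>i\<le>b. locally_valid T ((code_tail ^^ i) p) \<Longrightarrow> is_code T n p"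
proof (induction p arbitrary: n b rule: less_induct)
  case (less p)
  show ?case
  proof (cases "odd (unpair2 p)")
    case True
    then obtain z where "unpair2 p = Suc (2 * z)"
      using oddE by fastforce
    moreover have "unpair1 p = n"
      using less.prems(1) True by (simp add: code_index_def)
    ultimately show ?thesis
      using is_code.leaf[of T n z] pair_unpair[of p] by simp
  next
    case False
    moreover have "locally_valid T p"
      using less.prems(3) by (metis funpow_0 le0)
    ultimately have app: "is_app_code p" "triple (app_fun p) (app_arg p) (app_res p) \<in> T"
        "app_res p = code_index (unpair1 p)"
      unfolding locally_valid_def by auto
    have "0 < unpair2 p"
      using app(1) unfolding is_app_code_def by simp
    then have tail: "unpair1 p < p"
      by (rule unpair1_less)
    have "\<forall>i\<le>b - 1. locally_valid T ((code_tail ^^ i) (unpair1 p))"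
      using valid_spine_tail[of p b T] False tail less.prems(2,3) by simp
    moreover have "unpair1 p \<le> b - 1"
      using tail less.prems(2) by linarith
    ultimately have "is_code T (app_res p) (unpair1 p)"
      using less.IH[OF tail refl] app(3) by simp
    from is_code.app[OF app(2) this] have "is_code T (app_fun p) p"
      by (simp add: app_code_eq[OF app(1)])
    then show ?thesis
      using less.prems(1) False by (simp add: code_index_def)
  qed
qed

lemma is_code_iff_valid_spine:
  "is_code T n p \<longleftrightarrow> code_index p = n \<and> (\<forall>i<Suc p. locally_valid T ((code_tail ^^ i) p))"
  using is_code_imp_valid_spine valid_spine_imp_is_code[of p n p T] by (auto simp: less_Suc_eq_le)

lemma computable_app_exp: "computable k a \<Longrightarrow> computable k (\<lambda>xs. app_exp (a xs))"
  unfolding app_exp_def by (intro computable_log2 computable_unpair2)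

lemma computable_app_arg: "computable k a \<Longrightarrow> computable k (\<lambda>xs. app_arg (a xs))"
  unfolding app_arg_def by (intro computable_unpair1 computable_app_exp)

lemma computable_app_fun: "computable k a \<Longrightarrow> computable k (\<lambda>xs. app_fun (a xs))"
  unfolding app_fun_def by (intro computable_unpair1 computable_unpair2 computable_div2 computable_app_exp)

lemma computable_app_res: "computable k a \<Longrightarrow> computable k (\<lambda>xs. app_res (a xs))"
  unfolding app_res_def by (intro computable_unpair2 computable_div2 computable_app_exp)

lemma decidable_is_app_code: "computable k a \<Longrightarrow> decidable k (\<lambda>xs. is_app_code (a xs))"
  unfolding is_app_code_def
  by (intro decidable_conj decidable_eq decidable_odd computable_unpair2 computable_power2
      computable_app_exp)

lemma computable_code_index: "computable k a \<Longrightarrow> computable k (\<lambda>xs. code_index (a xs))"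
  unfolding code_index_def
  by (intro computable_if decidable_odd computable_unpair1 computable_unpair2 computable_app_fun)

lemma computable_code_tail: "computable k a \<Longrightarrow> computable k (\<lambda>xs. code_tail (a xs))"
  unfolding code_tail_def by (intro computable_if decidable_odd computable_unpair1 computable_unpair2)

lemma decidable_locally_valid:
  "computable k t \<Longrightarrow> computable k a \<Longrightarrow> decidable k (\<lambda>xs. locally_valid (D (t xs)) (a xs))"
  unfolding locally_valid_def
  by (intro decidable_disj decidable_conj decidable_odd decidable_is_app_code decidable_mem_set_decode
      decidable_eq computable_pair computable_unpair1 computable_unpair2 computable_app_arg
      computable_app_fun computable_app_res computable_code_index)

lemma computable_code_tail_iterate:
  assumes "computable k a" "computable k i"
  shows "computable k (\<lambda>xs. (code_tail ^^ i xs) (a xs))"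
proof -
  have "prim_rec a (\<lambda>zs. code_tail (zs ! 1)) t xs = (code_tail ^^ t) (a xs)" for t xs
    by (induction t) auto
  moreover have "computable k (\<lambda>xs. prim_rec a (\<lambda>zs. code_tail (zs ! 1)) (i xs) xs)"
    by (intro computable_prim_rec_at assms computable_code_tail computable_nth1)
  ultimately show ?thesis by simp
qed

lemma decidable_is_code:
  assumes "computable k t" "computable k n" "computable k p"
  shows "decidable k (\<lambda>xs. is_code (D (t xs)) (n xs) (p xs))"
proof -
  have "decidable (Suc k) (\<lambda>ys. locally_valid (D (t (drop 1 ys))) ((code_tail ^^ (ys ! 0)) (p (drop 1 ys))))"
    using computable_drop[OF assms(1), of 1] computable_drop[OF assms(3), of 1]
    by (intro decidable_locally_valid computable_code_tail_iterate computable_nth) simp_all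
  from decidable_ball[OF this computable_Suc[OF assms(3)]]
  have "decidable k (\<lambda>xs. \<forall>i<Suc (p xs). locally_valid (D (t xs)) ((code_tail ^^ i) (p xs)))"
    by simp
  then show ?thesis
    unfolding is_code_iff_valid_spine
    by (intro decidable_conj decidable_eq computable_code_index assms)
qed

section \<open>The image lies in the enumeration degree of the table\<close>

text \<open>If kk is an index of a combinator k with k a b = a and n0 is an index of a, then
  table entries triple kk n0 j and triple j q n certify that n is an index of a as well.\<close>

definition reindexing_set :: "nat \<Rightarrow> nat \<Rightarrow> nat set" where
  "reindexing_set kk n0 = {pair p u | p u n j q.
     triple kk n0 j \<in> D u \<and> triple j q n \<in> D u \<and> is_code (D u) n p}"

lemma ce_reindexing_set: "ce (reindexing_set kk n0)"
proof -
  define R where "R y x \<longleftrightarrow>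
    triple kk n0 (unpair1 (unpair2 y)) \<in> D (unpair2 x) \<and>
    triple (unpair1 (unpair2 y)) (unpair2 (unpair2 y)) (unpair1 y) \<in> D (unpair2 x) \<and>
    is_code (D (unpair2 x)) (unpair1 y) (unpair1 x)" for y x
  have "decidable 2 (\<lambda>zs. R (zs ! 0) (zs ! 1))"
    unfolding R_def
    by (intro decidable_conj decidable_mem_set_decode decidable_is_code computable_pair
        computable_const computable_unpair1 computable_unpair2 computable_nth) simp_all
  moreover have "{x. \<exists>y. R y x} = reindexing_set kk n0"
  proof (intro equalityI subsetI)
    fix x assume "x \<in> {x. \<exists>y. R y x}"
    then obtain y where y: "R y x"
      by blast
    show "x \<in> reindexing_set kk n0"
      unfolding reindexing_set_def
      by (rule CollectI, rule exI[of _ "unpair1 x"], rule exI[of _ "unpair2 x"], rule exI[of _ "unpair1 y"],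
          rule exI[of _ "unpair1 (unpair2 y)"], rule exI[of _ "unpair2 (unpair2 y)"])
        (use y in \<open>simp add: R_def pair_unpair\<close>)
  next
    fix x assume "x \<in> reindexing_set kk n0"
    then obtain p u n j q where "x = pair p u" "triple kk n0 j \<in> D u" "triple j q n \<in> D u"
        "is_code (D u) n p"
      unfolding reindexing_set_def by blast
    then have "R (pair n (pair j q)) x"
      unfolding R_def by simp
    then show "x \<in> {x. \<exists>y. R y x}" by blast
  qed
  ultimately show ?thesis
    using ce_projection[of R] by simp
qed

lemma gapp_reindexing_set_subset:
  assumes X: "X = app_table \<gamma> ap"
    and kk: "\<gamma> kk = Some k" and n0: "\<gamma> n0 = Some a"
    and c: "ap k a = Some c" "\<forall>b\<in>ran \<gamma>. ap c b = Some a"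
  shows "gapp (reindexing_set kk n0) X \<subseteq> graph_embedding \<gamma> X a"
proof
  fix p assume "p \<in> gapp (reindexing_set kk n0) X"
  then obtain u n j q where u: "D u \<subseteq> X" and j: "triple kk n0 j \<in> D u" and
      n: "triple j q n \<in> D u" "is_code (D u) n p"
    unfolding gapp_def reindexing_set_def by auto
  have "\<gamma> j = Some c"
    using u j kk n0 c(1) by (auto simp: X triple_mem_app_table_iff)
  moreover have "triple j q n \<in> X"
    using u n(1) by blast
  ultimately obtain b d where "\<gamma> q = Some b" "\<gamma> n = Some d" "ap c b = Some d"
    by (auto simp: X triple_mem_app_table_iff)
  moreover from this(1) have "ap c b = Some a"
    using c(2) by (auto simp: ran_def)
  ultimately have "\<gamma> n = Some a"
    by simp
  moreover have "is_code X n p"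
    using is_code_mono[OF n(2) u] .
  ultimately show "p \<in> graph_embedding \<gamma> X a"
    unfolding graph_embedding_def by blast
qed

lemma graph_embedding_subset_gapp_reindexing_set:
  assumes X: "X = app_table \<gamma> ap"
    and kk: "\<gamma> kk = Some k" and n0: "\<gamma> n0 = Some a"
    and c: "ap k a = Some c" "c \<in> ran \<gamma>" "\<forall>b\<in>ran \<gamma>. ap c b = Some a"
  shows "graph_embedding \<gamma> X a \<subseteq> gapp (reindexing_set kk n0) X"
proof
  fix p assume "p \<in> graph_embedding \<gamma> X a"
  then obtain n where n: "\<gamma> n = Some a" "is_code X n p"
    unfolding graph_embedding_def by blast
  obtain T where T: "finite T" "T \<subseteq> X" "is_code T n p"
    using is_code_finite_support[OF n(2)] by blast
  obtain j where j: "\<gamma> j = Some c"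
    using c(2) by (auto simp: ran_def)
  have "ap c a = Some a"
    using c(3) n0 by (auto simp: ran_def)
  then have new: "triple kk n0 j \<in> X" "triple j n0 n \<in> X"
    using kk n0 n(1) j c(1) by (auto simp: X triple_mem_app_table_iff)
  define T' where "T' = insert (triple kk n0 j) (insert (triple j n0 n) T)"
  have "is_code T' n p"
    by (rule is_code_mono[OF T(3)]) (auto simp: T'_def)
  moreover have "finite T'" "T' \<subseteq> X"
    using T new by (auto simp: T'_def)
  ultimately have "pair p (set_encode T') \<in> reindexing_set kk n0" "D (set_encode T') \<subseteq> X"
    unfolding reindexing_set_def by (auto simp: T'_def)
  then show "p \<in> gapp (reindexing_set kk n0) X"
    unfolding gapp_def by blast
qed

lemma graph_embedding_in_GX:
  assumes X: "X = app_table \<gamma> ap" and "a \<in> ran \<gamma>" "k \<in> ran \<gamma>"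
    and k: "\<forall>a\<in>ran \<gamma>. \<exists>c\<in>ran \<gamma>. ap k a = Some c \<and> (\<forall>b\<in>ran \<gamma>. ap c b = Some a)"
  shows "graph_embedding \<gamma> X a \<in> GX X"
proof -
  obtain c where c: "ap k a = Some c" "c \<in> ran \<gamma>" "\<forall>b\<in>ran \<gamma>. ap c b = Some a"
    using k assms(2) by blast
  obtain kk n0 where kk: "\<gamma> kk = Some k" and n0: "\<gamma> n0 = Some a"
    using assms(2,3) by (auto simp: ran_def)
  have "graph_embedding \<gamma> X a = gapp (reindexing_set kk n0) X"
    using graph_embedding_subset_gapp_reindexing_set[OF X kk n0 c]
      gapp_reindexing_set_subset[OF X kk n0 c(1,3)] by (rule equalityI)
  then show ?thesis
    using GX.app[OF GX.ce[OF ce_reindexing_set] GX.base] by simp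
qed

lemma pca_k_combinator:
  assumes "pca A ap"
  shows "\<exists>k\<in>A. \<forall>a\<in>A. \<exists>c\<in>A. ap k a = Some c \<and> (\<forall>b\<in>A. ap c b = Some a)"
proof -
  obtain k where k: "k \<in> A" "\<forall>a\<in>A. \<forall>b\<in>A. papp ap (papp ap (Some k) (Some a)) (Some b) = Some a"
    and closed: "\<forall>a\<in>A. \<forall>b\<in>A. \<forall>c. ap a b = Some c \<longrightarrow> c \<in> A"
    using assms unfolding pca_def by blast
  have "\<exists>c\<in>A. ap k a = Some c \<and> (\<forall>b\<in>A. ap c b = Some a)" if a: "a \<in> A" for a
  proof -
    have "papp ap (ap k a) (Some a) = Some a"
      using k(2)[rule_format, OF a a] by simp
    then obtain c where c: "ap k a = Some c"
      by (cases "ap k a") auto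
    have "ap c b = Some a" if "b \<in> A" for b
      using k(2)[rule_format, OF a that] c by simp
    moreover have "c \<in> A"
      using closed k(1) a c by blast
    ultimately show ?thesis
      using c by blast
  qed
  with k(1) show ?thesis
    by blast
qed

theorem theorem7p1:
  fixes A :: "'a set" and ap :: "'a \<Rightarrow> 'a \<Rightarrow> 'a option" and \<gamma> :: "nat \<Rightarrow> 'a option"
    and X :: "nat set"
  assumes "pca A ap"
    and "partial_numbering \<gamma> A"
    and "X = {triple n m k | n m k. \<exists>a b c. \<gamma> n = Some a \<and> \<gamma> m = Some b \<and> \<gamma> k = Some c \<and> ap a b = Some c}"
  shows "(\<exists>f. pca_embedding A ap (GX X) Gap f) \<and> (\<exists>f. pca_embedding A ap (UNIV :: nat set set) Gap f)"
proof -
  have ran: "ran \<gamma> = A"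
    using assms(2) unfolding partial_numbering_def .
  have X: "X = app_table \<gamma> ap"
    using assms(3) unfolding app_table_def .
  obtain k where k: "k \<in> A" "\<forall>a\<in>A. \<exists>c\<in>A. ap k a = Some c \<and> (\<forall>b\<in>A. ap c b = Some a)"
    using pca_k_combinator[OF assms(1)] by blast
  let ?F = "graph_embedding \<gamma> X"
  have "inj_on ?F A"
    using inj_on_graph_embedding[of A \<gamma>] ran by simp
  moreover have "Gap (?F a) (?F b) = Some (?F c)" if "a \<in> A" "b \<in> A" "ap a b = Some c" for a b c
    using gapp_graph_embedding[OF X that(3)] that(1,2) ran by (simp add: Gap_def)
  moreover have "?F a \<in> GX X" if "a \<in> A" for a
    using graph_embedding_in_GX[OF X] k that ran by simp
  ultimately have "pca_embedding A ap (GX X) Gap ?F" "pca_embedding A ap UNIV Gap ?F"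
    unfolding pca_embedding_def by auto
  then show ?thesis
    by blast
qed

end
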